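(* There exist absolute constants $c_1,c_2>0$ such that the following holds for all sufficiently large $n$. Let $t,s$ be integers with $2\le t<s<n/2$, and let $G$ be a graph on $n$ vertices such that every induced subgraph of $G$ on $s$ vertices contains an independent set of size $t$. Let $k=\lfloor \frac{s}{t-1}\rfloor$. Then: (i) if $k\le 2\log n$, then $G$ contains an independent set of size at least $c_1\, k\, n^{1/k}$; (ii) if $k>2\log n$, then $G$ contains an independent set of size at least $c_2\,\frac{\log n}{\log (k/\log n)}$.
   Context: All logarithms are natural. An independent set is a set of pairwise non-adjacent vertices. The $\Omega(\cdot)$ bounds of the paper are expressed here via absolute constants. *)

theory Defs
  imports Complex_Main
begin

text \<open>A simple graph on vertex set V is given by a symmetric, irreflexive edge relation E
  (only its restriction to V matters).\<close>

definition simple_graph :: "'a set \<Rightarrow> ('a \<Rightarrow> 'a \<Rightarrow> bool) \<Rightarrow> bool" where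
  "simple_graph V E \<longleftrightarrow> finite V \<and> (\<forall>x\<in>V. \<forall>y\<in>V. E x y \<longleftrightarrow> E y x) \<and> (\<forall>x\<in>V. \<not> E x x)"

definition indep_set :: "('a \<Rightarrow> 'a \<Rightarrow> bool) \<Rightarrow> 'a set \<Rightarrow> bool" where
  "indep_set E I \<longleftrightarrow> (\<forall>x\<in>I. \<forall>y\<in>I. \<not> E x y)"

end

theory Submission
  imports Defs "HOL-Analysis.Harmonic_Numbers"
begin

text \<open>
  Let k = s div (t - 1), so that s < (t - 1)(k + 1). Adjoin disjoint (k + 1)-cliques one at a
  time: each raises the independence number of the collected set by at most one. After t - 1
  steps the set would have (t - 1)(k + 1) > s vertices but no independent t-set, which the
  hypothesis forbids; so the process stops at a set X of fewer than s vertices, and G - X has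
  more than n/2 vertices and no (k + 1)-clique. By the Erdos--Szekeres bound G - X then has an
  independent set of size j + 1 whenever C(k + j, k) \<le> n/2. With C(m, i) \<le> (e m / i)^i,
  the choices j ~ k n^(1/k) / e^3 (if n^(1/k) \<ge> e^3), j ~ ln n / 32 (otherwise, when
  k \<le> 2 ln n) and j ~ ln n / (64 ln (k / ln n)) (if k > 2 ln n) give the two bounds.
\<close>

definition clique :: "('a \<Rightarrow> 'a \<Rightarrow> bool) \<Rightarrow> 'a set \<Rightarrow> bool" where
  "clique E C \<longleftrightarrow> (\<forall>x\<in>C. \<forall>y\<in>C. x \<noteq> y \<longrightarrow> E x y)"

definition indep_number_le :: "('a \<Rightarrow> 'a \<Rightarrow> bool) \<Rightarrow> 'a set \<Rightarrow> nat \<Rightarrow> bool" where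
  "indep_number_le E X m \<longleftrightarrow> (\<forall>I\<subseteq>X. indep_set E I \<longrightarrow> card I \<le> m)"

lemma simple_graph_subset: "simple_graph V E \<Longrightarrow> W \<subseteq> V \<Longrightarrow> simple_graph W E"
  unfolding simple_graph_def by (meson finite_subset subsetD)

lemma clique_insert_neighbours:
  assumes sg: "simple_graph V E" and v: "v \<in> V" and C: "C \<subseteq> {x\<in>V - {v}. E v x}" "clique E C"
  shows "insert v C \<subseteq> V" "card (insert v C) = Suc (card C)" "clique E (insert v C)"
proof -
  have "C \<subseteq> V" "v \<notin> C" using C(1) by blast+
  moreover have "finite V" using sg by (simp add: simple_graph_def)
  ultimately show "insert v C \<subseteq> V" "card (insert v C) = Suc (card C)"
    using v by (auto intro: card_insert_disjoint dest: finite_subset)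
  have "E x v" if "x \<in> C" for x
    using sg v that C(1) unfolding simple_graph_def by blast
  then show "clique E (insert v C)" using C unfolding clique_def by auto
qed

lemma indep_set_insert_non_neighbours:
  assumes sg: "simple_graph V E" and v: "v \<in> V" and I: "I \<subseteq> {x\<in>V - {v}. \<not> E v x}" "indep_set E I"
  shows "insert v I \<subseteq> V" "card (insert v I) = Suc (card I)" "indep_set E (insert v I)"
proof -
  have "I \<subseteq> V" "v \<notin> I" using I(1) by blast+
  moreover have "finite V" using sg by (simp add: simple_graph_def)
  ultimately show "insert v I \<subseteq> V" "card (insert v I) = Suc (card I)"
    using v by (auto intro: card_insert_disjoint dest: finite_subset)
  have "\<not> E x v" if "x \<in> I" for x
    using sg v that I(1) unfolding simple_graph_def by blast
  moreover have "\<not> E v v" using sg v by (simp add: simple_graph_def)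
  ultimately show "indep_set E (insert v I)" using I unfolding indep_set_def by auto
qed

lemma card_split_at_vertex:
  assumes "finite V" "v \<in> V"
  shows "card V = Suc (card {x\<in>V - {v}. E v x} + card {x\<in>V - {v}. \<not> E v x})"
proof -
  have "card ({x\<in>V - {v}. E v x} \<union> {x\<in>V - {v}. \<not> E v x}) =
      card {x\<in>V - {v}. E v x} + card {x\<in>V - {v}. \<not> E v x}"
    using assms(1) by (intro card_Un_disjoint) auto
  moreover have "{x\<in>V - {v}. E v x} \<union> {x\<in>V - {v}. \<not> E v x} = V - {v}" by blast
  ultimately show ?thesis using card_Suc_Diff1[OF assms] by simp
qed

lemma ramsey_clique_indep_set:
  assumes "simple_graph V E" "(q + a) choose q \<le> card V"
  shows "(\<exists>C\<subseteq>V. card C = Suc q \<and> clique E C) \<or> (\<exists>I\<subseteq>V. card I = Suc a \<and> indep_set E I)"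
  using assms
proof (induction "q + a" arbitrary: q a V rule: less_induct)
  case less
  have sg: "simple_graph V E" by fact
  have "card V > 0"
    using less.prems(2) zero_less_binomial[of q "q + a"] by linarith
  then obtain v where v: "v \<in> V" by fastforce
  consider "q = 0" | "a = 0" | q' a' where "q = Suc q'" "a = Suc a'"
    using not0_implies_Suc by blast
  then show ?case
  proof cases
    case 1
    then show ?thesis using v by (intro disjI1 exI[of _ "{v}"]) (auto simp: clique_def)
  next
    case 2
    then show ?thesis using v sg
      by (intro disjI2 exI[of _ "{v}"]) (auto simp: indep_set_def simple_graph_def)
  next
    case (3 q' a')
    define nbrs where "nbrs = {x\<in>V - {v}. E v x}"
    define non_nbrs where "non_nbrs = {x\<in>V - {v}. \<not> E v x}"
    have sub: "nbrs \<subseteq> V" "non_nbrs \<subseteq> V" by (auto simp: nbrs_def non_nbrs_def)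
    have "card V = Suc (card nbrs + card non_nbrs)"
      using card_split_at_vertex[OF _ v] sg unfolding nbrs_def non_nbrs_def simple_graph_def by blast
    moreover have "(q + a) choose q = ((q' + a) choose q') + ((q + a') choose q)"
      using 3 by simp
    ultimately consider "(q' + a) choose q' \<le> card nbrs" | "(q + a') choose q \<le> card non_nbrs"
      using less.prems(2) by linarith
    then show ?thesis
    proof cases
      case 1
      have "q' + a < q + a" using 3 by simp
      from less.hyps[OF this simple_graph_subset[OF sg sub(1)] 1]
      consider C where "C \<subseteq> nbrs" "card C = Suc q'" "clique E C"
        | "\<exists>I\<subseteq>V. card I = Suc a \<and> indep_set E I"
        using sub(1) by blast
      then show ?thesis
      proof cases
        case (1 C)
        then have "C \<subseteq> {x\<in>V - {v}. E v x}" by (simp add: nbrs_def)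
        from clique_insert_neighbours[OF sg v this 1(3)] show ?thesis
          using 1(2) 3 by (intro disjI1 exI[of _ "insert v C"]) simp
      qed blast
    next
      case 2
      have "q + a' < q + a" using 3 by simp
      from less.hyps[OF this simple_graph_subset[OF sg sub(2)] 2]
      consider "\<exists>C\<subseteq>V. card C = Suc q \<and> clique E C"
        | I where "I \<subseteq> non_nbrs" "card I = Suc a'" "indep_set E I"
        using sub(2) by blast
      then show ?thesis
      proof cases
        case (2 I)
        then have "I \<subseteq> {x\<in>V - {v}. \<not> E v x}" by (simp add: non_nbrs_def)
        from indep_set_insert_non_neighbours[OF sg v this 2(3)] show ?thesis
          using 2(2) 3 by (intro disjI2 exI[of _ "insert v I"]) simp
      qed blast
    qed
  qed
qed

lemma indep_set_if_clique_free:
  assumes "simple_graph V E" "\<forall>C\<subseteq>V. card C = Suc k \<longrightarrow> \<not> clique E C"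
    and "(k + j) choose k \<le> card V"
  shows "\<exists>I\<subseteq>V. indep_set E I \<and> card I = Suc j"
proof -
  have "\<not> (\<exists>C\<subseteq>V. card C = Suc k \<and> clique E C)" using assms(2) by blast
  then show ?thesis using ramsey_clique_indep_set[OF assms(1,3)] by auto
qed

lemma card_indep_clique_inter_le_1:
  assumes "indep_set E I" "clique E C"
  shows "card (I \<inter> C) \<le> 1"
proof (cases "finite (I \<inter> C)")
  case True
  then show ?thesis
    using assms unfolding indep_set_def clique_def by (auto simp: card_le_Suc0_iff_eq)
qed simp

lemma indep_number_le_Un_clique:
  assumes "indep_number_le E X m" "clique E C"
  shows "indep_number_le E (X \<union> C) (Suc m)"
  unfolding indep_number_le_def
proof (intro allI impI)
  fix I assume I: "I \<subseteq> X \<union> C" "indep_set E I"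
  have "card (I \<inter> X) \<le> m"
    using assms(1) I unfolding indep_number_le_def indep_set_def by (meson Int_iff Int_lower2)
  moreover have "card (I \<inter> C) \<le> 1" using card_indep_clique_inter_le_1 I assms(2) by blast
  moreover have "card I \<le> card (I \<inter> X) + card (I \<inter> C)"
    using I card_Un_le[of "I \<inter> X" "I \<inter> C"] by (metis Int_Un_distrib le_iff_inf)
  ultimately show "card I \<le> Suc m" by linarith
qed

lemma greedy_clique_removal:
  assumes "finite V"
  shows "(\<exists>X\<subseteq>V. card X = m * q \<and> indep_number_le E X m) \<or>
    (\<exists>X\<subseteq>V. indep_number_le E X m \<and> (\<forall>C\<subseteq>V - X. card C = q \<longrightarrow> \<not> clique E C))"
proof (induction m)
  case 0
  show ?case by (intro disjI1 exI[of _ "{}"]) (simp add: indep_number_le_def)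
next
  case (Suc m)
  have mono: "indep_number_le E X (Suc m)" if "indep_number_le E X m" for X
    using that le_SucI unfolding indep_number_le_def by blast
  from Suc.IH show ?case
  proof
    assume "\<exists>X\<subseteq>V. card X = m * q \<and> indep_number_le E X m"
    then obtain X where X: "X \<subseteq> V" "card X = m * q" "indep_number_le E X m" by blast
    show ?case
    proof (cases "\<exists>C\<subseteq>V - X. card C = q \<and> clique E C")
      case True
      then obtain C where C: "C \<subseteq> V - X" "card C = q" "clique E C" by blast
      have "finite X" "finite C" using X(1) C(1) assms by (meson Diff_subset finite_subset subset_trans)+
      moreover have "X \<inter> C = {}" using C(1) by blast
      ultimately have "card (X \<union> C) = Suc m * q" using X(2) C(2) by (simp add: card_Un_disjoint)
      moreover have "X \<union> C \<subseteq> V" using X(1) C(1) by blast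
      ultimately show ?thesis
        using indep_number_le_Un_clique[OF X(3) C(3)] by (intro disjI1 exI[of _ "X \<union> C"]) simp
    next
      case False
      then show ?thesis using X(1) mono[OF X(3)] by (intro disjI2 exI[of _ X]) auto
    qed
  next
    assume "\<exists>X\<subseteq>V. indep_number_le E X m \<and> (\<forall>C\<subseteq>V - X. card C = q \<longrightarrow> \<not> clique E C)"
    then show ?case using mono by blast
  qed
qed

lemma clique_free_after_small_deletion:
  assumes "finite V"
    and hyp: "\<forall>S\<subseteq>V. card S = s \<longrightarrow> (\<exists>I\<subseteq>S. card I = t \<and> indep_set E I)"
    and "s < (t - 1) * q"
  shows "\<exists>X\<subseteq>V. card X < s \<and> (\<forall>C\<subseteq>V - X. card C = q \<longrightarrow> \<not> clique E C)"
proof -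
  have small: "card X < s" if X: "X \<subseteq> V" "indep_number_le E X (t - 1)" for X
  proof (rule ccontr)
    assume "\<not> card X < s"
    then obtain S where S: "S \<subseteq> X" "card S = s" by (meson not_less obtain_subset_with_card_n)
    then have "S \<subseteq> V" using X(1) by blast
    then obtain I where I: "I \<subseteq> S" "card I = t" "indep_set E I" using hyp S(2) by blast
    have "card I \<le> t - 1"
      using X(2) I(1,3) S(1) unfolding indep_number_le_def by (meson subset_trans)
    moreover have "t \<noteq> 0" using assms(3) by (cases t) simp_all
    ultimately show False using I(2) by linarith
  qed
  from greedy_clique_removal[OF assms(1), of "t - 1" q E] show ?thesis
  proof
    assume "\<exists>X\<subseteq>V. card X = (t - 1) * q \<and> indep_number_le E X (t - 1)"
    then obtain X where "X \<subseteq> V" "card X = (t - 1) * q" "indep_number_le E X (t - 1)" by blast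
    with small assms(3) have False by (metis not_less_iff_gr_or_eq order.strict_trans)
    then show ?thesis ..
  next
    assume "\<exists>X\<subseteq>V. indep_number_le E X (t - 1) \<and> (\<forall>C\<subseteq>V - X. card C = q \<longrightarrow> \<not> clique E C)"
    then show ?thesis using small by blast
  qed
qed


lemma power_div_fact_le_exp:
  fixes x :: real
  assumes "0 \<le> x"
  shows "x ^ i / fact i \<le> exp x"
proof -
  have "(\<lambda>m. if m = i then x ^ m / fact m else 0) sums (x ^ i / fact i)"
    by (rule sums_single)
  moreover have "(\<lambda>m. x ^ m / fact m) sums exp x"
    using exp_converges[of x] by (simp add: divide_inverse_commute scaleR_conv_of_real)
  ultimately show ?thesis
    by (rule sums_le[rotated]) (use assms in auto)
qed

lemma binomial_le_exp_mult_pow: "real (m choose i) \<le> (exp 1 * real m / real i) ^ i"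
proof (cases "i = 0")
  case False
  have "real (m choose i) * fact i \<le> real m ^ i"
    using binomial_fact_pow[of m i] by (metis of_nat_fact of_nat_le_iff of_nat_mult of_nat_power)
  then have "real (m choose i) \<le> real m ^ i / fact i" by (simp add: field_simps)
  also have "\<dots> = (real m / real i) ^ i * (real i ^ i / fact i)"
    using False by (simp add: power_divide)
  also have "\<dots> \<le> (real m / real i) ^ i * exp (real i)"
    using power_div_fact_le_exp[of "real i" i] by (intro mult_left_mono) auto
  also have "\<dots> = (exp 1 * real m / real i) ^ i"
    using exp_of_nat_mult[of i "1::real"] by (simp add: power_divide power_mult_distrib)
  finally show ?thesis .
qed simp

lemma binomial_le_pow_if_ratio_le:
  assumes "1 \<le> A" "1 \<le> j" "real k \<le> A * real j"
  shows "real ((k + j) choose k) \<le> (2 * exp 1 * A) ^ j"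
proof -
  have "real j \<le> A * real j" using assms(1) mult_right_mono[of 1 A "real j"] by simp
  then have "real (k + j) \<le> 2 * A * real j" using assms(3) by simp
  then have "exp 1 * real (k + j) / real j \<le> 2 * exp 1 * A"
    using assms(2) by (simp add: divide_le_eq)
  then have "(exp 1 * real (k + j) / real j) ^ j \<le> (2 * exp 1 * A) ^ j"
    by (rule power_mono) simp
  then show ?thesis
    using binomial_le_exp_mult_pow[of "k + j" j] binomial_symmetric[of j "k + j"] by simp
qed

lemma ln_two_power_le: "ln (2 ^ m :: real) \<le> real m"
  using ln_2_less_1 mult_left_mono[of "ln 2" 1 "real m"] by (simp add: ln_realpow)

lemma exists_binomial_le_half_of_ln_bound:
  fixes n y A :: real
  assumes "2 \<le> n" "1 \<le> A" "real k \<le> A * y / 2" "y * (1 + ln (2 * A)) \<le> ln n - ln 2"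
  shows "\<exists>j. real ((k + j) choose k) \<le> n / 2 \<and> y \<le> real j + 1"
proof (cases "1 \<le> y")
  case False
  then show ?thesis using assms(1) by (intro exI[of _ 0]) auto
next
  case True
  define j where "j = nat \<lfloor>y\<rfloor>"
  have "real j = of_int \<lfloor>y\<rfloor>" using True unfolding j_def by simp
  then have j: "1 \<le> j" "real j \<le> y" "y \<le> 2 * real j" "y \<le> real j + 1"
    using True real_of_int_floor_add_one_ge[of y] le_floor_iff[of 1 y] by linarith+
  have "A * y / 2 \<le> A * real j" using assms(2) j(3) by simp
  then have "real ((k + j) choose k) \<le> (2 * exp 1 * A) ^ j"
    using binomial_le_pow_if_ratio_le[OF assms(2) j(1)] assms(3) by simp
  also have "\<dots> = exp (real j * (1 + ln (2 * A)))"
    using assms(2) exp_of_nat_mult[of j "1 + ln (2 * A)"] by (simp add: exp_add ac_simps)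
  also have "\<dots> \<le> exp (ln n - ln 2)"
  proof -
    have "0 \<le> 1 + ln (2 * A)" using assms(2) by simp
    with j(2) have "real j * (1 + ln (2 * A)) \<le> y * (1 + ln (2 * A))"
      by (rule mult_right_mono)
    then show ?thesis using assms(4) by simp
  qed
  also have "\<dots> = n / 2" using assms(1) by (simp add: exp_diff)
  finally show ?thesis using j(4) by blast
qed

lemma exists_binomial_le_pow_half:
  fixes x :: real
  assumes "1 \<le> k" "exp 3 \<le> x"
  shows "\<exists>j. real ((k + j) choose k) \<le> x ^ k / 2 \<and> real k * x / exp 3 \<le> real j + 1"
proof -
  define j where "j = nat \<lfloor>real k * x / exp 3\<rfloor>"
  have x: "0 < x" using assms(2) exp_gt_zero[of 3] by linarith
  then have "real j = of_int \<lfloor>real k * x / exp 3\<rfloor>" unfolding j_def by simp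
  then have j: "real j \<le> real k * x / exp 3" "real k * x / exp 3 \<le> real j + 1"
    by linarith+
  have "exp 1 * real (k + j) / real k = exp 1 * (1 + real j / real k)"
    using assms(1) by (simp add: field_simps)
  also have "\<dots> \<le> exp 1 * (1 + x / exp 3)"
    using j(1) assms(1) by (simp add: divide_le_eq mult.commute)
  also have "\<dots> \<le> exp 1 * (2 * x / exp 3)"
    using assms(2) by (simp add: field_simps)
  also have "\<dots> = 2 * x / (exp 1 * exp 1)"
    using exp_add[of 1 "2::real"] exp_add[of 1 "1::real"] by simp
  also have "\<dots> \<le> x / 2"
  proof -
    have "4 \<le> exp 1 * (exp 1 :: real)"
      using exp_ge_add_one_self[of 1] mult_mono[of 2 "exp 1" 2 "exp 1 :: real"] by simp
    then show ?thesis using x by (simp add: divide_le_eq field_simps)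
  qed
  finally have "(exp 1 * real (k + j) / real k) ^ k \<le> (x / 2) ^ k"
    by (rule power_mono) simp
  also have "\<dots> \<le> x ^ k / 2"
  proof -
    have "(2::real) ^ 1 \<le> 2 ^ k" using assms(1) by (rule power_increasing) simp
    then show ?thesis
      unfolding power_divide using x by (intro divide_left_mono) auto
  qed
  finally have "real ((k + j) choose k) \<le> x ^ k / 2"
    using binomial_le_exp_mult_pow[of "k + j" k] by linarith
  then show ?thesis using j(2) by blast
qed

lemma exists_binomial_le_half_small_k:
  fixes n :: real
  assumes n: "exp 20 \<le> n" and k: "1 \<le> k" "real k \<le> 2 * ln n"
  shows "\<exists>j. real ((k + j) choose k) \<le> n / 2 \<and> 1/2000 * real k * n powr (1 / real k) \<le> real j + 1"
proof -
  have n_pos: "0 < n" using n exp_gt_zero[of 20] by linarith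
  have L: "20 \<le> ln n" using n n_pos by (simp add: ln_ge_iff)
  define x where "x = n powr (1 / real k)"
  have x_pow: "x ^ k = n"
    using n_pos k(1) by (simp add: x_def powr_realpow[symmetric] powr_powr)
  have x_pos: "0 < x" using n_pos by (simp add: x_def)
  have exp3: "exp 3 \<le> (27::real)"
    using exp_of_nat_mult[of 3 "1::real"] power_mono[OF exp_le, of 3] by simp
  show ?thesis
  proof (cases "exp 3 \<le> x")
    case True
    then obtain j where j: "real ((k + j) choose k) \<le> n / 2" "real k * x / exp 3 \<le> real j + 1"
      using exists_binomial_le_pow_half[OF k(1)] x_pow by metis
    have "real k * x * exp 3 \<le> real k * x * 2000"
      using exp3 x_pos by (intro mult_left_mono) auto
    then have "1/2000 * real k * x \<le> real k * x / exp 3" by (simp add: field_simps)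
    then show ?thesis using j unfolding x_def by (blast intro: order_trans)
  next
    case False
    have "ln n / 32 * (1 + ln (2 * 128)) \<le> ln n / 32 * 9"
      using ln_two_power_le[of 8] L by (intro mult_left_mono) auto
    then have "ln n / 32 * (1 + ln (2 * 128)) \<le> ln n - ln 2" using L ln_2_less_1 by linarith
    moreover have "(2::real) \<le> n" using n exp_ge_add_one_self[of 20] by linarith
    ultimately obtain j where j: "real ((k + j) choose k) \<le> n / 2" "ln n / 32 \<le> real j + 1"
      using exists_binomial_le_half_of_ln_bound[of n 128 k "ln n / 32"] k(2) by auto
    have "real k * x \<le> 2 * ln n * 27"
      using False exp3 k(2) x_pos by (intro mult_mono) auto
    then show ?thesis using j L unfolding x_def by fastforce
  qed
qed

lemma exists_binomial_le_half_large_k: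
  fixes n :: real
  assumes n: "exp 20 \<le> n" and k: "2 * ln n < real k"
  shows "\<exists>j. real ((k + j) choose k) \<le> n / 2 \<and> 1/64 * ln n / ln (real k / ln n) \<le> real j + 1"
proof -
  have n_pos: "0 < n" using n exp_gt_zero[of 20] by linarith
  define L where "L = ln n"
  have L: "20 \<le> L" using n n_pos by (simp add: L_def ln_ge_iff)
  define r where "r = real k / L"
  have r: "2 < r" "real k = r * L" using k L unfolding r_def L_def by (simp_all add: field_simps)
  have "ln 2 \<le> ln r" using r(1) by simp
  then have lr: "2/3 \<le> ln r" "ln r < r"
    using ln2_ge_two_thirds ln_less_self[of r] r(1) by linarith+
  have lr_pos: "0 < ln r" using lr(1) by linarith
  define y where "y = L / (64 * ln r)"
  have y: "0 < y" unfolding y_def using lr_pos L by simp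
  have "real k \<le> 128 * r\<^sup>2 * y / 2"
  proof -
    have "1 \<le> r / ln r" using lr by (subst le_divide_eq_1_pos) linarith+
    then have "r * L * 1 \<le> r * L * (r / ln r)" using r L by (intro mult_left_mono) auto
    then show ?thesis using r(2) lr unfolding y_def by (simp add: power2_eq_square field_simps)
  qed
  moreover have "y * (1 + ln (2 * (128 * r\<^sup>2))) \<le> L - ln 2"
  proof -
    have "ln (2 * (128 * r\<^sup>2)) = ln (2 ^ 8) + 2 * ln r"
      using r(1) by (simp add: ln_mult ln_realpow)
    also have "\<dots> \<le> 8 + 2 * ln r" using ln_two_power_le[of 8] by simp
    finally have "y * (1 + ln (2 * (128 * r\<^sup>2))) \<le> y * (9 + 2 * ln r)"
      using y by (intro mult_left_mono) auto
    also have "\<dots> = 9 * L / (64 * ln r) + L / 32" using lr_pos unfolding y_def by (simp add: field_simps)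
    also have "9 * L / (64 * ln r) \<le> 9 * L / (64 * (2/3))"
      using lr lr_pos L by (intro divide_left_mono mult_left_mono) auto
    finally show ?thesis using L ln_2_less_1 by simp
  qed
  moreover have "(2::real) \<le> n" using n exp_ge_add_one_self[of 20] by linarith
  moreover have "1 \<le> 128 * r\<^sup>2" using one_le_power[of r 2] r(1) by linarith
  ultimately show ?thesis
    using exists_binomial_le_half_of_ln_bound[of n "128 * r\<^sup>2" k y]
    unfolding y_def r_def L_def by (simp add: field_simps)
qed

lemma indep_set_of_binomial_le:
  assumes sg: "simple_graph V E" and "card V = n" "2 \<le> t" "real s < real n / 2"
    and hyp: "\<forall>S\<subseteq>V. card S = s \<longrightarrow> (\<exists>I\<subseteq>S. card I = t \<and> indep_set E I)"
    and binom: "real ((s div (t - 1) + j) choose (s div (t - 1))) \<le> real n / 2"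
  shows "\<exists>I\<subseteq>V. indep_set E I \<and> card I = Suc j"
proof -
  define k where "k = s div (t - 1)"
  have fin: "finite V" using sg by (simp add: simple_graph_def)
  have "s < (t - 1) * Suc k"
    using dividend_less_times_div[of "t - 1" s] assms(3) unfolding k_def by simp
  from clique_free_after_small_deletion[OF fin hyp this]
  obtain X where X: "X \<subseteq> V" "card X < s"
    and clique_free: "\<forall>C\<subseteq>V - X. card C = Suc k \<longrightarrow> \<not> clique E C" by blast
  have "card X \<le> n" using X(2) assms(4) by linarith
  then have "real n / 2 \<le> real (card (V - X))"
    using X fin assms(2,4) by (simp add: card_Diff_subset finite_subset of_nat_diff)
  then have "(k + j) choose k \<le> card (V - X)"
    using binom unfolding k_def by linarith
  from indep_set_if_clique_free[OF simple_graph_subset[OF sg Diff_subset] clique_free this]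
  show ?thesis by blast
qed

lemma indep_set_lower_bounds:
  fixes V :: "'a set"
  assumes n: "exp 20 \<le> real n" and t: "2 \<le> t" "t < s"
    and graph: "simple_graph V E" "card V = n" "real s < real n / 2"
      "\<forall>S\<subseteq>V. card S = s \<longrightarrow> (\<exists>I\<subseteq>S. card I = t \<and> indep_set E I)"
  defines "k \<equiv> s div (t - 1)"
  shows "real k \<le> 2 * ln (real n) \<Longrightarrow>
      \<exists>I\<subseteq>V. indep_set E I \<and> 1/2000 * real k * real n powr (1 / real k) \<le> real (card I)"
    and "2 * ln (real n) < real k \<Longrightarrow>
      \<exists>I\<subseteq>V. indep_set E I \<and> 1/64 * ln (real n) / ln (real k / ln (real n)) \<le> real (card I)"
proof -
  have indep: "\<exists>I\<subseteq>V. indep_set E I \<and> b \<le> real (card I)"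
    if "real ((k + j) choose k) \<le> real n / 2" "b \<le> real j + 1" for j b
  proof -
    from indep_set_of_binomial_le[OF graph(1,2) t(1) graph(3,4) that(1)[unfolded k_def]]
    obtain I where "I \<subseteq> V" "indep_set E I" "card I = Suc j" by blast
    then show ?thesis using that(2) by (intro exI[of _ I]) simp
  qed
  have k: "1 \<le> k" using t unfolding k_def by (simp add: Suc_le_eq div_greater_zero_iff)
  show "\<exists>I\<subseteq>V. indep_set E I \<and> 1/2000 * real k * real n powr (1 / real k) \<le> real (card I)"
    if "real k \<le> 2 * ln (real n)"
    using exists_binomial_le_half_small_k[OF n k that] indep by blast
  show "\<exists>I\<subseteq>V. indep_set E I \<and> 1/64 * ln (real n) / ln (real k / ln (real n)) \<le> real (card I)"
    if "2 * ln (real n) < real k"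
    using exists_binomial_le_half_large_k[OF n that] indep by blast
qed

theorem theorem2p1:
  shows "\<exists>c1 c2 :: real. c1 > 0 \<and> c2 > 0 \<and> (\<exists>N :: nat. \<forall>n \<ge> N.
    \<forall>(t :: nat) (s :: nat) (V :: nat set) (E :: nat \<Rightarrow> nat \<Rightarrow> bool).
      2 \<le> t \<and> t < s \<and> real s < real n / 2 \<and>
      simple_graph V E \<and> card V = n \<and>
      (\<forall>S \<subseteq> V. card S = s \<longrightarrow> (\<exists>I \<subseteq> S. card I = t \<and> indep_set E I)) \<longrightarrow>
      (let k = s div (t - 1) in
        (real k \<le> 2 * ln (real n) \<longrightarrow>
           (\<exists>I \<subseteq> V. indep_set E I \<and> real (card I) \<ge> c1 * real k * real n powr (1 / real k))) \<and>
        (real k > 2 * ln (real n) \<longrightarrow>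
           (\<exists>I \<subseteq> V. indep_set E I \<and>
              real (card I) \<ge> c2 * ln (real n) / ln (real k / ln (real n))))))"
proof (rule exI[of _ "1/2000"], rule exI[of _ "1/64"],
    intro conjI exI[of _ "nat \<lceil>exp (20::real)\<rceil>"] allI impI)
  fix n t s :: nat and V :: "nat set" and E :: "nat \<Rightarrow> nat \<Rightarrow> bool"
  assume "nat \<lceil>exp (20::real)\<rceil> \<le> n"
  then have n: "exp 20 \<le> real n" by linarith
  assume "2 \<le> t \<and> t < s \<and> real s < real n / 2 \<and> simple_graph V E \<and> card V = n \<and>
    (\<forall>S\<subseteq>V. card S = s \<longrightarrow> (\<exists>I\<subseteq>S. card I = t \<and> indep_set E I))"
  then have "2 \<le> t" "t < s" "simple_graph V E" "card V = n" "real s < real n / 2"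
    "\<forall>S\<subseteq>V. card S = s \<longrightarrow> (\<exists>I\<subseteq>S. card I = t \<and> indep_set E I)"
    by simp_all
  note bounds = indep_set_lower_bounds[OF n this]
  show "let k = s div (t - 1) in
      (real k \<le> 2 * ln (real n) \<longrightarrow>
        (\<exists>I \<subseteq> V. indep_set E I \<and> real (card I) \<ge> 1/2000 * real k * real n powr (1 / real k))) \<and>
      (real k > 2 * ln (real n) \<longrightarrow>
        (\<exists>I \<subseteq> V. indep_set E I \<and> real (card I) \<ge> 1/64 * ln (real n) / ln (real k / ln (real n))))"
    unfolding Let_def using bounds by blast
qed simp_all

end
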